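(* Let $(\mathcal C,\otimes,I)$ be a closed monoidal category, $M$ a strong monad on $\mathcal C$ with strength $\tau$, and $A$ an object. Then the tuple $\langle MA\Rightarrow MA,\ \Lambda(p),\ \mathsf{comp},\ \mathsf{ident}\rangle$, where $p = \mu_A\circ M\mathsf{app}\circ\tau : M(MA\Rightarrow MA)\otimes MA\to M((MA\Rightarrow MA)\otimes MA)\to MMA\to MA$, is an Eilenberg--Moore $M$-monoid.
   Context: Closed means each functor $(-)\otimes B$ has a right adjoint $B\Rightarrow(-)$; $\Lambda: \mathcal C(X\otimes B,C)\cong\mathcal C(X,B\Rightarrow C)$ denotes currying and $\mathsf{app}:(B\Rightarrow C)\otimes B\to C$ the counit. Structural isomorphisms are written $\cong$. $\mathsf{comp}=\Lambda(k):(B\Rightarrow C)\otimes(X\Rightarrow B)\to(X\Rightarrow C)$ where $k = \mathsf{app}\circ(\mathrm{id}\otimes\mathsf{app})\circ\cong : ((B\Rightarrow C)\otimes(X\Rightarrow B))\otimes X\to C$, and $\mathsf{ident}=\Lambda(I\otimes X\xrightarrow{\cong}X): I\to(X\Rightarrow X)$ (here with $X=B=C=MA$). A strong monad has strength $\tau_{X,Y}: MX\otimes Y\to M(X\otimes Y)$ satisfying the usual coherence laws. An Eilenberg--Moore $M$-monoid is $\langle E,a: ME\to E,m: E\otimes E\to E,u: I\to E\rangle$ with $\langle E,a\rangle$ an Eilenberg--Moore $M$-algebra ($a\circ Ma=a\circ\mu$, $a\circ\eta=\mathrm{id}$), $\langle E,m,u\rangle$ a monoid, and $m\circ(a\otimes\mathrm{id}_E)=a\circ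 Mm\circ\tau_{E,E}$. *)

theory Defs
  imports Main
begin

text \<open>Categories are given by hom-sets Hom X Y (objects of type 'o, morphisms of
 type 'm), composition cmp g f (g after f) and identities idm X.\<close>

locale category =
  fixes Hom :: "'o \<Rightarrow> 'o \<Rightarrow> 'm set"
    and cmp :: "'m \<Rightarrow> 'm \<Rightarrow> 'm"
    and idm :: "'o \<Rightarrow> 'm"
  assumes cmp_Hom: "\<And>f g X Y Z. f \<in> Hom X Y \<Longrightarrow> g \<in> Hom Y Z \<Longrightarrow> cmp g f \<in> Hom X Z"
    and idm_Hom: "\<And>X. idm X \<in> Hom X X"
    and idm_left: "\<And>f X Y. f \<in> Hom X Y \<Longrightarrow> cmp (idm Y) f = f"
    and idm_right: "\<And>f X Y. f \<in> Hom X Y \<Longrightarrow> cmp f (idm X) = f"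
    and cmp_assoc: "\<And>f g h W X Y Z. f \<in> Hom W X \<Longrightarrow> g \<in> Hom X Y \<Longrightarrow> h \<in> Hom Y Z \<Longrightarrow>
                      cmp h (cmp g f) = cmp (cmp h g) f"

definition is_iso :: "('o \<Rightarrow> 'o \<Rightarrow> 'm set) \<Rightarrow> ('m \<Rightarrow> 'm \<Rightarrow> 'm) \<Rightarrow> ('o \<Rightarrow> 'm)
    \<Rightarrow> 'o \<Rightarrow> 'o \<Rightarrow> 'm \<Rightarrow> bool" where
  "is_iso Hom cmp idm X Y f \<longleftrightarrow> f \<in> Hom X Y \<and>
     (\<exists>g \<in> Hom Y X. cmp g f = idm X \<and> cmp f g = idm Y)"

locale monoidal_category = category Hom cmp idm
  for Hom :: "'o \<Rightarrow> 'o \<Rightarrow> 'm set"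
    and cmp :: "'m \<Rightarrow> 'm \<Rightarrow> 'm"
    and idm :: "'o \<Rightarrow> 'm" +
  fixes tens :: "'o \<Rightarrow> 'o \<Rightarrow> 'o"
    and tensm :: "'m \<Rightarrow> 'm \<Rightarrow> 'm"
    and I :: 'o
    and asc :: "'o \<Rightarrow> 'o \<Rightarrow> 'o \<Rightarrow> 'm"
    and lu :: "'o \<Rightarrow> 'm"
    and ru :: "'o \<Rightarrow> 'm"
  assumes tensm_Hom: "\<And>f g A B C D. f \<in> Hom A B \<Longrightarrow> g \<in> Hom C D \<Longrightarrow>
                          tensm f g \<in> Hom (tens A C) (tens B D)"
    and tensm_idm: "\<And>A B. tensm (idm A) (idm B) = idm (tens A B)"
    and tensm_cmp: "\<And>f g f' g' A B C A' B' C'. f \<in> Hom A B \<Longrightarrow> g \<in> Hom B C \<Longrightarrow>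
                       f' \<in> Hom A' B' \<Longrightarrow> g' \<in> Hom B' C' \<Longrightarrow>
                       tensm (cmp g f) (cmp g' f') = cmp (tensm g g') (tensm f f')"
    and asc_iso: "\<And>X Y Z. is_iso Hom cmp idm (tens (tens X Y) Z) (tens X (tens Y Z)) (asc X Y Z)"
    and lu_iso: "\<And>X. is_iso Hom cmp idm (tens I X) X (lu X)"
    and ru_iso: "\<And>X. is_iso Hom cmp idm (tens X I) X (ru X)"
    and asc_nat: "\<And>f g h A A' B B' C C'. f \<in> Hom A A' \<Longrightarrow> g \<in> Hom B B' \<Longrightarrow> h \<in> Hom C C' \<Longrightarrow>
        cmp (asc A' B' C') (tensm (tensm f g) h) = cmp (tensm f (tensm g h)) (asc A B C)"
    and lu_nat: "\<And>f A B. f \<in> Hom A B \<Longrightarrow> cmp f (lu A) = cmp (lu B) (tensm (idm I) f)"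
    and ru_nat: "\<And>f A B. f \<in> Hom A B \<Longrightarrow> cmp f (ru A) = cmp (ru B) (tensm f (idm I))"
    and pentagon: "\<And>W X Y Z.
        cmp (asc W X (tens Y Z)) (asc (tens W X) Y Z)
        = cmp (tensm (idm W) (asc X Y Z)) (cmp (asc W (tens X Y) Z) (tensm (asc W X Y) (idm Z)))"
    and triangle: "\<And>X Y. cmp (tensm (idm X) (lu Y)) (asc X I Y) = tensm (ru X) (idm Y)"

text \<open>Closedness: each (-)\<otimes>B has a right adjoint B \<Rightarrow> (-), given by the
 object exp B C and the counit app B C : (B \<Rightarrow> C)\<otimes>B \<rightarrow> C with the universal property.\<close>

locale closed_monoidal_category = monoidal_category Hom cmp idm tens tensm I asc lu ru
  for Hom :: "'o \<Rightarrow> 'o \<Rightarrow> 'm set"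
    and cmp :: "'m \<Rightarrow> 'm \<Rightarrow> 'm"
    and idm :: "'o \<Rightarrow> 'm"
    and tens :: "'o \<Rightarrow> 'o \<Rightarrow> 'o"
    and tensm :: "'m \<Rightarrow> 'm \<Rightarrow> 'm"
    and I :: 'o
    and asc :: "'o \<Rightarrow> 'o \<Rightarrow> 'o \<Rightarrow> 'm"
    and lu :: "'o \<Rightarrow> 'm"
    and ru :: "'o \<Rightarrow> 'm" +
  fixes exp :: "'o \<Rightarrow> 'o \<Rightarrow> 'o"
    and app :: "'o \<Rightarrow> 'o \<Rightarrow> 'm"
  assumes app_Hom: "\<And>B C. app B C \<in> Hom (tens (exp B C) B) C"
    and curry_unique: "\<And>X B C f. f \<in> Hom (tens X B) C \<Longrightarrow>
        \<exists>!h. h \<in> Hom X (exp B C) \<and> cmp (app B C) (tensm h (idm B)) = f"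

definition Lam :: "('o \<Rightarrow> 'o \<Rightarrow> 'm set) \<Rightarrow> ('m \<Rightarrow> 'm \<Rightarrow> 'm) \<Rightarrow> ('o \<Rightarrow> 'm) \<Rightarrow> ('m \<Rightarrow> 'm \<Rightarrow> 'm)
    \<Rightarrow> ('o \<Rightarrow> 'o \<Rightarrow> 'o) \<Rightarrow> ('o \<Rightarrow> 'o \<Rightarrow> 'm) \<Rightarrow> 'o \<Rightarrow> 'o \<Rightarrow> 'o \<Rightarrow> 'm \<Rightarrow> 'm" where
  "Lam Hom cmp idm tensm exp app X B C f =
     (THE h. h \<in> Hom X (exp B C) \<and> cmp (app B C) (tensm h (idm B)) = f)"

locale strong_monad_closed = closed_monoidal_category Hom cmp idm tens tensm I asc lu ru exp app
  for Hom :: "'o \<Rightarrow> 'o \<Rightarrow> 'm set"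
    and cmp :: "'m \<Rightarrow> 'm \<Rightarrow> 'm"
    and idm :: "'o \<Rightarrow> 'm"
    and tens :: "'o \<Rightarrow> 'o \<Rightarrow> 'o"
    and tensm :: "'m \<Rightarrow> 'm \<Rightarrow> 'm"
    and I :: 'o
    and asc :: "'o \<Rightarrow> 'o \<Rightarrow> 'o \<Rightarrow> 'm"
    and lu :: "'o \<Rightarrow> 'm"
    and ru :: "'o \<Rightarrow> 'm"
    and exp :: "'o \<Rightarrow> 'o \<Rightarrow> 'o"
    and app :: "'o \<Rightarrow> 'o \<Rightarrow> 'm" +
  fixes Mo :: "'o \<Rightarrow> 'o"
    and Mm :: "'m \<Rightarrow> 'm"
    and eta :: "'o \<Rightarrow> 'm"
    and mu :: "'o \<Rightarrow> 'm"
    and tau :: "'o \<Rightarrow> 'o \<Rightarrow> 'm"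
  assumes Mm_Hom: "\<And>f X Y. f \<in> Hom X Y \<Longrightarrow> Mm f \<in> Hom (Mo X) (Mo Y)"
    and Mm_idm: "\<And>X. Mm (idm X) = idm (Mo X)"
    and Mm_cmp: "\<And>f g X Y Z. f \<in> Hom X Y \<Longrightarrow> g \<in> Hom Y Z \<Longrightarrow> Mm (cmp g f) = cmp (Mm g) (Mm f)"
    and eta_Hom: "\<And>X. eta X \<in> Hom X (Mo X)"
    and mu_Hom: "\<And>X. mu X \<in> Hom (Mo (Mo X)) (Mo X)"
    and eta_nat: "\<And>f X Y. f \<in> Hom X Y \<Longrightarrow> cmp (eta Y) f = cmp (Mm f) (eta X)"
    and mu_nat: "\<And>f X Y. f \<in> Hom X Y \<Longrightarrow> cmp (mu Y) (Mm (Mm f)) = cmp (Mm f) (mu X)"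
    and mu_assoc: "\<And>X. cmp (mu X) (Mm (mu X)) = cmp (mu X) (mu (Mo X))"
    and mu_eta_left: "\<And>X. cmp (mu X) (eta (Mo X)) = idm (Mo X)"
    and mu_eta_right: "\<And>X. cmp (mu X) (Mm (eta X)) = idm (Mo X)"
    and tau_Hom: "\<And>X Y. tau X Y \<in> Hom (tens (Mo X) Y) (Mo (tens X Y))"
    and tau_nat: "\<And>f g X X' Y Y'. f \<in> Hom X X' \<Longrightarrow> g \<in> Hom Y Y' \<Longrightarrow>
        cmp (tau X' Y') (tensm (Mm f) g) = cmp (Mm (tensm f g)) (tau X Y)"
    and tau_unit: "\<And>X. cmp (Mm (ru X)) (tau X I) = ru (Mo X)"
    and tau_assoc: "\<And>X Y Z.
        cmp (tau X (tens Y Z)) (asc (Mo X) Y Z)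
        = cmp (Mm (asc X Y Z)) (cmp (tau (tens X Y) Z) (tensm (tau X Y) (idm Z)))"
    and tau_eta: "\<And>X Y. cmp (tau X Y) (tensm (eta X) (idm Y)) = eta (tens X Y)"
    and tau_mu: "\<And>X Y. cmp (tau X Y) (tensm (mu X) (idm Y))
        = cmp (mu (tens X Y)) (cmp (Mm (tau X Y)) (tau (Mo X) Y))"

definition em_monoid ::
  "('o \<Rightarrow> 'o \<Rightarrow> 'm set) \<Rightarrow> ('m \<Rightarrow> 'm \<Rightarrow> 'm) \<Rightarrow> ('o \<Rightarrow> 'm)
   \<Rightarrow> ('o \<Rightarrow> 'o \<Rightarrow> 'o) \<Rightarrow> ('m \<Rightarrow> 'm \<Rightarrow> 'm) \<Rightarrow> 'o \<Rightarrow> ('o \<Rightarrow> 'o \<Rightarrow> 'o \<Rightarrow> 'm) \<Rightarrow> ('o \<Rightarrow> 'm) \<Rightarrow> ('o \<Rightarrow> 'm)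
   \<Rightarrow> ('o \<Rightarrow> 'o) \<Rightarrow> ('m \<Rightarrow> 'm) \<Rightarrow> ('o \<Rightarrow> 'm) \<Rightarrow> ('o \<Rightarrow> 'm) \<Rightarrow> ('o \<Rightarrow> 'o \<Rightarrow> 'm)
   \<Rightarrow> 'o \<Rightarrow> 'm \<Rightarrow> 'm \<Rightarrow> 'm \<Rightarrow> bool" where
  "em_monoid Hom cmp idm tens tensm I asc lu ru Mo Mm eta mu tau E a m u \<longleftrightarrow>
     \<comment> \<open>Eilenberg--Moore algebra\<close>
     a \<in> Hom (Mo E) E \<and>
     cmp a (Mm a) = cmp a (mu E) \<and>
     cmp a (eta E) = idm E \<and>
     \<comment> \<open>monoid\<close>
     m \<in> Hom (tens E E) E \<and>
     u \<in> Hom I E \<and>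
     cmp m (tensm m (idm E)) = cmp m (cmp (tensm (idm E) m) (asc E E E)) \<and>
     cmp m (tensm u (idm E)) = lu E \<and>
     cmp m (tensm (idm E) u) = ru E \<and>
     \<comment> \<open>compatibility\<close>
     cmp m (tensm a (idm E)) = cmp a (cmp (Mm m) (tau E E))"

end

theory Submission
  imports Defs
begin

text \<open>For any object B, the exponential B \<Rightarrow> B is a monoid under internal composition;
  each monoid law is checked after uncurrying, where it becomes the pentagon, the triangle,
  or Kelly's identity lu (X \<otimes> Y) \<circ> asc I X Y = lu X \<otimes> Y. An Eilenberg--Moore algebra
  b : MB \<rightarrow> B induces the action \<Lambda>(b \<circ> M app \<circ> \<tau>) on B \<Rightarrow> B: after uncurrying, its algebra
  laws are those of b combined with the compatibility of \<tau> with \<mu> and \<eta>, and its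
  compatibility with composition is the associativity law of \<tau>. The theorem is the case
  of the free algebra \<mu> A : M(MA) \<rightarrow> MA.\<close>

named_theorems hom_intros

context category
begin

lemmas [hom_intros] = cmp_Hom idm_Hom

lemma cmp_assoc_right:
  "f \<in> Hom W X \<Longrightarrow> g \<in> Hom X Y \<Longrightarrow> h \<in> Hom Y Z \<Longrightarrow> cmp (cmp h g) f = cmp h (cmp g f)"
  by (simp add: cmp_assoc)

lemma iso_cancel_right:
  assumes "is_iso Hom cmp idm X Y f" "u \<in> Hom Y Z" "v \<in> Hom Y Z" "cmp u f = cmp v f"
  shows "u = v"
proof -
  from assms(1) obtain g where g: "g \<in> Hom Y X" "cmp f g = idm Y" and f: "f \<in> Hom X Y"
    unfolding is_iso_def by auto
  have "u = cmp (cmp u f) g"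
    using g cmp_assoc[OF g(1) f assms(2)] idm_right[OF assms(2)] by simp
  also have "\<dots> = v"
    using g cmp_assoc[OF g(1) f assms(3)] idm_right[OF assms(3)] assms(4) by simp
  finally show ?thesis .
qed

end

context monoidal_category
begin

lemma asc_Hom [hom_intros]: "asc X Y Z \<in> Hom (tens (tens X Y) Z) (tens X (tens Y Z))"
  using asc_iso unfolding is_iso_def by blast

lemma lu_Hom [hom_intros]: "lu X \<in> Hom (tens I X) X"
  using lu_iso unfolding is_iso_def by blast

lemma ru_Hom [hom_intros]: "ru X \<in> Hom (tens X I) X"
  using ru_iso unfolding is_iso_def by blast

lemmas [hom_intros] = tensm_Hom

lemma tensm_cmp_idm:
  assumes "f \<in> Hom A B" "g \<in> Hom B C"
  shows "tensm (cmp g f) (idm X) = cmp (tensm g (idm X)) (tensm f (idm X))"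
  using tensm_cmp[OF assms idm_Hom idm_Hom] idm_left[OF idm_Hom] by simp

lemma tensm_idm_cmp:
  assumes "f \<in> Hom A B" "g \<in> Hom B C"
  shows "tensm (idm X) (cmp g f) = cmp (tensm (idm X) g) (tensm (idm X) f)"
  using tensm_cmp[OF idm_Hom idm_Hom assms] idm_left[OF idm_Hom] by simp

lemma tensm_snd_then_fst:
  assumes "f \<in> Hom A B" "g \<in> Hom C D"
  shows "tensm f g = cmp (tensm f (idm D)) (tensm (idm A) g)"
  using tensm_cmp[OF idm_Hom assms(1) assms(2) idm_Hom] idm_left[OF assms(2)] idm_right[OF assms(1)]
  by simp

lemma is_iso_tensm_idm:
  assumes "is_iso Hom cmp idm X Y f"
  shows "is_iso Hom cmp idm (tens X Z) (tens Y Z) (tensm f (idm Z))"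
proof -
  from assms obtain g where g: "g \<in> Hom Y X" "cmp g f = idm X" "cmp f g = idm Y" and f: "f \<in> Hom X Y"
    unfolding is_iso_def by auto
  show ?thesis
    unfolding is_iso_def
    using g f tensm_cmp_idm[OF f g(1)] tensm_cmp_idm[OF g(1) f] tensm_idm
    by (intro conjI bexI[of _ "tensm g (idm Z)"] tensm_Hom idm_Hom) auto
qed

lemma tensm_idm_unit_inj:
  assumes "f \<in> Hom A B" "g \<in> Hom A B" "tensm (idm I) f = tensm (idm I) g"
  shows "f = g"
  using iso_cancel_right[OF lu_iso assms(1,2)] lu_nat[OF assms(1)] lu_nat[OF assms(2)] assms(3)
  by simp

lemma lu_tens: "cmp (lu (tens X Y)) (asc I X Y) = tensm (lu X) (idm Y)"
proof -
  \<comment> \<open>Both sides agree after applying I \<otimes> - and precomposing with the isomorphism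
    asc I (I \<otimes> X) Y \<circ> (asc I I X \<otimes> Y), by the pentagon and two triangles; I \<otimes> - is faithful.\<close>
  let ?L = "cmp (lu (tens X Y)) (asc I X Y)" and ?R = "tensm (lu X) (idm Y)"
  have L [hom_intros]: "?L \<in> Hom (tens (tens I X) Y) (tens X Y)"
    and R [hom_intros]: "?R \<in> Hom (tens (tens I X) Y) (tens X Y)"
    by (rule hom_intros)+
  have "cmp (cmp (tensm (idm I) ?L) (asc I (tens I X) Y)) (tensm (asc I I X) (idm Y))
      = cmp (cmp (cmp (tensm (idm I) (lu (tens X Y))) (tensm (idm I) (asc I X Y))) (asc I (tens I X) Y))
          (tensm (asc I I X) (idm Y))"
    by (simp add: tensm_idm_cmp[OF asc_Hom lu_Hom])
  also have "\<dots> = cmp (tensm (idm I) (lu (tens X Y)))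
      (cmp (tensm (idm I) (asc I X Y)) (cmp (asc I (tens I X) Y) (tensm (asc I I X) (idm Y))))"
    by (subst cmp_assoc_right, (rule hom_intros)+)+ (rule refl)
  also have "\<dots> = cmp (tensm (idm I) (lu (tens X Y))) (cmp (asc I I (tens X Y)) (asc (tens I I) X Y))"
    by (simp add: pentagon)
  also have "\<dots> = cmp (cmp (tensm (idm I) (lu (tens X Y))) (asc I I (tens X Y))) (asc (tens I I) X Y)"
    by (subst cmp_assoc_right, (rule hom_intros)+)+ (rule refl)
  also have "\<dots> = cmp (asc I X Y) (tensm (tensm (ru I) (idm X)) (idm Y))"
    by (simp add: triangle tensm_idm asc_nat[OF ru_Hom idm_Hom idm_Hom])
  also have "\<dots> = cmp (asc I X Y) (cmp (tensm (tensm (idm I) (lu X)) (idm Y)) (tensm (asc I I X) (idm Y)))"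
    by (simp add: triangle[symmetric] tensm_cmp_idm[OF asc_Hom tensm_Hom[OF idm_Hom lu_Hom]])
  also have "\<dots> = cmp (cmp (asc I X Y) (tensm (tensm (idm I) (lu X)) (idm Y))) (tensm (asc I I X) (idm Y))"
    by (subst cmp_assoc_right, (rule hom_intros)+)+ (rule refl)
  also have "\<dots> = cmp (cmp (tensm (idm I) ?R) (asc I (tens I X) Y)) (tensm (asc I I X) (idm Y))"
    by (simp add: asc_nat[OF idm_Hom lu_Hom idm_Hom])
  finally have "cmp (tensm (idm I) ?L) (asc I (tens I X) Y) = cmp (tensm (idm I) ?R) (asc I (tens I X) Y)"
    by (rule iso_cancel_right[OF is_iso_tensm_idm[OF asc_iso], rotated 2]) (rule hom_intros)+
  then have "tensm (idm I) ?L = tensm (idm I) ?R"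
    by (rule iso_cancel_right[OF asc_iso, rotated 2]) (rule hom_intros)+
  then show ?thesis
    by (rule tensm_idm_unit_inj[OF L R])
qed

end

context closed_monoidal_category
begin

abbreviation lam :: "'o \<Rightarrow> 'o \<Rightarrow> 'o \<Rightarrow> 'm \<Rightarrow> 'm" where
  "lam \<equiv> Lam Hom cmp idm tensm exp app"

lemmas [hom_intros] = app_Hom

lemma lam_Hom [hom_intros]: "f \<in> Hom (tens X B) C \<Longrightarrow> lam X B C f \<in> Hom X (exp B C)"
  and app_lam: "f \<in> Hom (tens X B) C \<Longrightarrow> cmp (app B C) (tensm (lam X B C f) (idm B)) = f"
  using theI'[OF curry_unique] unfolding Lam_def by simp_all

lemma exp_ext:
  assumes "h1 \<in> Hom X (exp B C)" "h2 \<in> Hom X (exp B C)"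
    and "cmp (app B C) (tensm h1 (idm B)) = cmp (app B C) (tensm h2 (idm B))"
  shows "h1 = h2"
proof -
  have "cmp (app B C) (tensm h1 (idm B)) \<in> Hom (tens X B) C"
    by (rule hom_intros assms(1))+
  from curry_unique[OF this] assms show ?thesis
    by (metis (no_types, lifting))
qed

lemma app_tensm_cmp:
  assumes "h \<in> Hom Y (exp B C)" "g \<in> Hom X Y"
  shows "cmp (app B C) (tensm (cmp h g) (idm B)) = cmp (cmp (app B C) (tensm h (idm B))) (tensm g (idm B))"
  using tensm_cmp_idm[OF assms(2,1)] cmp_assoc[OF tensm_Hom[OF assms(2) idm_Hom] tensm_Hom[OF assms(1) idm_Hom] app_Hom]
  by simp

definition int_comp :: "'o \<Rightarrow> 'm" where
  "int_comp B = lam (tens (exp B B) (exp B B)) B B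
     (cmp (app B B) (cmp (tensm (idm (exp B B)) (app B B)) (asc (exp B B) (exp B B) B)))"

definition int_ident :: "'o \<Rightarrow> 'm" where
  "int_ident B = lam I B B (lu B)"

lemma int_comp_Hom [hom_intros]: "int_comp B \<in> Hom (tens (exp B B) (exp B B)) (exp B B)"
  unfolding int_comp_def by (rule hom_intros)+

lemma int_ident_Hom [hom_intros]: "int_ident B \<in> Hom I (exp B B)"
  unfolding int_ident_def by (rule hom_intros)+

lemma app_int_comp:
  "cmp (app B B) (tensm (int_comp B) (idm B))
     = cmp (app B B) (cmp (tensm (idm (exp B B)) (app B B)) (asc (exp B B) (exp B B) B))"
  unfolding int_comp_def by (rule app_lam) (rule hom_intros)+

lemma app_int_ident: "cmp (app B B) (tensm (int_ident B) (idm B)) = lu B"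
  unfolding int_ident_def by (rule app_lam) (rule hom_intros)+

lemma app_int_comp_tensm:
  assumes [hom_intros]: "h \<in> Hom X (exp B B)" "g \<in> Hom Y (exp B B)"
  shows "cmp (app B B) (tensm (cmp (int_comp B) (tensm h g)) (idm B))
    = cmp (app B B) (cmp (tensm h (cmp (app B B) (tensm g (idm B)))) (asc X Y B))"
proof -
  let ?E = "exp B B" and ?ev = "app B B"
  have "cmp ?ev (tensm (cmp (int_comp B) (tensm h g)) (idm B))
      = cmp (cmp ?ev (cmp (tensm (idm ?E) ?ev) (asc ?E ?E B))) (tensm (tensm h g) (idm B))"
    by (simp add: app_tensm_cmp[OF int_comp_Hom tensm_Hom[OF assms]] app_int_comp)
  also have "\<dots> = cmp ?ev (cmp (tensm (idm ?E) ?ev) (cmp (asc ?E ?E B) (tensm (tensm h g) (idm B))))"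
    by (subst cmp_assoc_right, (rule hom_intros)+)+ (rule refl)
  also have "\<dots> = cmp ?ev (cmp (tensm (idm ?E) ?ev) (cmp (tensm h (tensm g (idm B))) (asc X Y B)))"
    by (simp add: asc_nat[OF assms idm_Hom])
  also have "\<dots> = cmp ?ev (cmp (cmp (tensm (idm ?E) ?ev) (tensm h (tensm g (idm B)))) (asc X Y B))"
    by (subst cmp_assoc_right, (rule hom_intros)+)+ (rule refl)
  also have "\<dots> = cmp ?ev (cmp (tensm h (cmp ?ev (tensm g (idm B)))) (asc X Y B))"
    by (simp add: tensm_cmp[OF assms(1) idm_Hom tensm_Hom[OF assms(2) idm_Hom] app_Hom, symmetric]
        idm_left[OF assms(1)])
  finally show ?thesis .
qed

lemma app_tensm_idm: "cmp (app B C) (tensm (idm (exp B C)) (idm B)) = app B C"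
  by (simp add: tensm_idm idm_right[OF app_Hom])

lemma int_comp_left_unit: "cmp (int_comp B) (tensm (int_ident B) (idm (exp B B))) = lu (exp B B)"
proof (rule exp_ext)
  let ?E = "exp B B" and ?ev = "app B B"
  have "cmp ?ev (tensm (cmp (int_comp B) (tensm (int_ident B) (idm ?E))) (idm B))
      = cmp ?ev (cmp (cmp (tensm (int_ident B) (idm B)) (tensm (idm I) ?ev)) (asc I ?E B))"
    by (simp add: app_int_comp_tensm[OF int_ident_Hom idm_Hom] app_tensm_idm
        tensm_snd_then_fst[OF int_ident_Hom app_Hom])
  also have "\<dots> = cmp (cmp ?ev (tensm (int_ident B) (idm B))) (cmp (tensm (idm I) ?ev) (asc I ?E B))"
    by (subst cmp_assoc_right, (rule hom_intros)+)+ (rule refl)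
  also have "\<dots> = cmp (cmp ?ev (lu (tens ?E B))) (asc I ?E B)"
    by (simp add: app_int_ident lu_nat[OF app_Hom] cmp_assoc[OF asc_Hom tensm_Hom[OF idm_Hom app_Hom] lu_Hom])
  also have "\<dots> = cmp ?ev (tensm (lu ?E) (idm B))"
    by (simp add: cmp_assoc[OF asc_Hom lu_Hom app_Hom, symmetric] lu_tens)
  finally show "cmp ?ev (tensm (cmp (int_comp B) (tensm (int_ident B) (idm ?E))) (idm B))
      = cmp ?ev (tensm (lu ?E) (idm B))" .
qed (rule hom_intros)+

lemma int_comp_right_unit: "cmp (int_comp B) (tensm (idm (exp B B)) (int_ident B)) = ru (exp B B)"
proof (rule exp_ext)
  let ?E = "exp B B" and ?ev = "app B B"
  show "cmp ?ev (tensm (cmp (int_comp B) (tensm (idm ?E) (int_ident B))) (idm B))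
      = cmp ?ev (tensm (ru ?E) (idm B))"
    by (simp add: app_int_comp_tensm[OF idm_Hom int_ident_Hom] app_int_ident triangle[symmetric])
qed (rule hom_intros)+

lemma int_comp_assoc:
  "cmp (int_comp B) (tensm (int_comp B) (idm (exp B B)))
     = cmp (int_comp B) (cmp (tensm (idm (exp B B)) (int_comp B)) (asc (exp B B) (exp B B) (exp B B)))"
proof (rule exp_ext)
  let ?E = "exp B B" and ?ev = "app B B" and ?c = "int_comp B"
  let ?T = "cmp ?ev (cmp (tensm (idm ?E) ?ev) (tensm (idm ?E) (tensm (idm ?E) ?ev)))"
  have "cmp ?ev (tensm (cmp ?c (tensm ?c (idm ?E))) (idm B))
      = cmp ?ev (cmp (cmp (tensm ?c (idm B)) (tensm (idm (tens ?E ?E)) ?ev)) (asc (tens ?E ?E) ?E B))"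
    by (simp add: app_int_comp_tensm[OF int_comp_Hom idm_Hom] app_tensm_idm
        tensm_snd_then_fst[OF int_comp_Hom app_Hom])
  also have "\<dots> = cmp (cmp ?ev (tensm ?c (idm B))) (cmp (tensm (idm (tens ?E ?E)) ?ev) (asc (tens ?E ?E) ?E B))"
    by (subst cmp_assoc_right, (rule hom_intros)+)+ (rule refl)
  also have "\<dots> = cmp ?ev (cmp (tensm (idm ?E) ?ev)
      (cmp (cmp (asc ?E ?E B) (tensm (idm (tens ?E ?E)) ?ev)) (asc (tens ?E ?E) ?E B)))"
    unfolding app_int_comp by (subst cmp_assoc_right, (rule hom_intros)+)+ (rule refl)
  also have "\<dots> = cmp ?ev (cmp (tensm (idm ?E) ?ev)
      (cmp (cmp (tensm (idm ?E) (tensm (idm ?E) ?ev)) (asc ?E ?E (tens ?E B))) (asc (tens ?E ?E) ?E B)))"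
    by (simp add: asc_nat[OF idm_Hom idm_Hom app_Hom, simplified tensm_idm])
  also have "\<dots> = cmp ?T (cmp (asc ?E ?E (tens ?E B)) (asc (tens ?E ?E) ?E B))"
    by (subst cmp_assoc_right, (rule hom_intros)+)+ (rule refl)
  finally have lhs: "cmp ?ev (tensm (cmp ?c (tensm ?c (idm ?E))) (idm B))
      = cmp ?T (cmp (asc ?E ?E (tens ?E B)) (asc (tens ?E ?E) ?E B))" .
  have "cmp ?ev (tensm (cmp ?c (cmp (tensm (idm ?E) ?c) (asc ?E ?E ?E))) (idm B))
      = cmp ?ev (tensm (cmp (cmp ?c (tensm (idm ?E) ?c)) (asc ?E ?E ?E)) (idm B))"
    by (subst cmp_assoc_right, (rule hom_intros)+)+ (rule refl)
  also have "\<dots> = cmp (cmp ?ev (cmp (tensm (idm ?E) (cmp ?ev (tensm ?c (idm B)))) (asc ?E (tens ?E ?E) B)))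
      (tensm (asc ?E ?E ?E) (idm B))"
    by (simp add: app_tensm_cmp[OF cmp_Hom[OF tensm_Hom[OF idm_Hom int_comp_Hom] int_comp_Hom] asc_Hom]
        app_int_comp_tensm[OF idm_Hom int_comp_Hom])
  also have "\<dots> = cmp (cmp ?ev (cmp (tensm (idm ?E) (cmp (cmp ?ev (tensm (idm ?E) ?ev)) (asc ?E ?E B)))
      (asc ?E (tens ?E ?E) B))) (tensm (asc ?E ?E ?E) (idm B))"
    unfolding app_int_comp by (subst cmp_assoc_right, (rule hom_intros)+)+ (rule refl)
  also have "\<dots> = cmp (cmp ?ev (cmp (cmp (cmp (tensm (idm ?E) ?ev) (tensm (idm ?E) (tensm (idm ?E) ?ev)))
      (tensm (idm ?E) (asc ?E ?E B))) (asc ?E (tens ?E ?E) B))) (tensm (asc ?E ?E ?E) (idm B))"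
    by (simp add: tensm_idm_cmp[OF asc_Hom cmp_Hom[OF tensm_Hom[OF idm_Hom app_Hom] app_Hom]]
        tensm_idm_cmp[OF tensm_Hom[OF idm_Hom app_Hom] app_Hom])
  also have "\<dots> = cmp ?T (cmp (tensm (idm ?E) (asc ?E ?E B))
      (cmp (asc ?E (tens ?E ?E) B) (tensm (asc ?E ?E ?E) (idm B))))"
    by (subst cmp_assoc_right, (rule hom_intros)+)+ (rule refl)
  also have "\<dots> = cmp ?T (cmp (asc ?E ?E (tens ?E B)) (asc (tens ?E ?E) ?E B))"
    by (simp add: pentagon)
  finally show "cmp ?ev (tensm (cmp ?c (tensm ?c (idm ?E))) (idm B))
      = cmp ?ev (tensm (cmp ?c (cmp (tensm (idm ?E) ?c) (asc ?E ?E ?E))) (idm B))"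
    using lhs by simp
qed (rule hom_intros)+

end

context strong_monad_closed
begin

lemmas [hom_intros] = Mm_Hom eta_Hom mu_Hom tau_Hom

lemma Mm_tau_tensm_Mm:
  assumes [hom_intros]: "f \<in> Hom (tens X' Y') C" "h \<in> Hom X X'" "g \<in> Hom Y Y'"
  shows "cmp (Mm f) (cmp (tau X' Y') (tensm (Mm h) g)) = cmp (Mm (cmp f (tensm h g))) (tau X Y)"
proof -
  have "cmp (Mm f) (cmp (tau X' Y') (tensm (Mm h) g)) = cmp (Mm f) (cmp (Mm (tensm h g)) (tau X Y))"
    by (simp add: tau_nat[OF assms(2,3)])
  also have "\<dots> = cmp (Mm (cmp f (tensm h g))) (tau X Y)"
    unfolding Mm_cmp[OF tensm_Hom[OF assms(2,3)] assms(1)]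
    by (subst cmp_assoc_right, (rule hom_intros)+)+ (rule refl)
  finally show ?thesis .
qed

definition exp_alg :: "'o \<Rightarrow> 'm \<Rightarrow> 'm" where
  "exp_alg B b = lam (Mo (exp B B)) B B (cmp b (cmp (Mm (app B B)) (tau (exp B B) B)))"

lemma exp_alg_Hom [hom_intros]: "b \<in> Hom (Mo B) B \<Longrightarrow> exp_alg B b \<in> Hom (Mo (exp B B)) (exp B B)"
  unfolding exp_alg_def by (rule hom_intros | assumption)+

lemma app_exp_alg:
  "b \<in> Hom (Mo B) B \<Longrightarrow>
     cmp (app B B) (tensm (exp_alg B b) (idm B)) = cmp b (cmp (Mm (app B B)) (tau (exp B B) B))"
  unfolding exp_alg_def by (rule app_lam) (rule hom_intros | assumption)+

lemma app_exp_alg_tensm_Mm: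
  assumes [hom_intros]: "b \<in> Hom (Mo B) B" "h \<in> Hom X (exp B B)" "g \<in> Hom Y B"
  shows "cmp (cmp (app B B) (tensm (exp_alg B b) (idm B))) (tensm (Mm h) g)
    = cmp b (cmp (Mm (cmp (app B B) (tensm h g))) (tau X Y))"
  unfolding app_exp_alg[OF assms(1)]
  by (subst cmp_assoc_right, (rule hom_intros)+)+ (simp add: Mm_tau_tensm_Mm[OF app_Hom assms(2,3)])

lemma exp_alg_mult:
  assumes b [hom_intros]: "b \<in> Hom (Mo B) B" and mult: "cmp b (Mm b) = cmp b (mu B)"
  shows "cmp (exp_alg B b) (Mm (exp_alg B b)) = cmp (exp_alg B b) (mu (exp B B))"
proof (rule exp_ext)
  let ?E = "exp B B" and ?ev = "app B B" and ?a = "exp_alg B b"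
  let ?t = "cmp (Mm (tau ?E B)) (tau (Mo ?E) B)"
  have "cmp ?ev (tensm (cmp ?a (Mm ?a)) (idm B))
      = cmp b (cmp (Mm (cmp b (cmp (Mm ?ev) (tau ?E B)))) (tau (Mo ?E) B))"
    by (simp only: app_tensm_cmp[OF exp_alg_Hom[OF b] Mm_Hom[OF exp_alg_Hom[OF b]]]
        app_exp_alg_tensm_Mm[OF b exp_alg_Hom[OF b] idm_Hom]) (simp only: app_exp_alg[OF b])
  also have "\<dots> = cmp (cmp b (Mm b)) (cmp (Mm (Mm ?ev)) ?t)"
    unfolding Mm_cmp[OF cmp_Hom[OF tau_Hom Mm_Hom[OF app_Hom]] b] Mm_cmp[OF tau_Hom Mm_Hom[OF app_Hom]]
    by (subst cmp_assoc_right, (rule hom_intros)+)+ (rule refl)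
  also have "\<dots> = cmp b (cmp (cmp (mu B) (Mm (Mm ?ev))) ?t)"
    unfolding mult by (subst cmp_assoc_right, (rule hom_intros)+)+ (rule refl)
  also have "\<dots> = cmp b (cmp (Mm ?ev) (cmp (mu (tens ?E B)) ?t))"
    unfolding mu_nat[OF app_Hom] by (subst cmp_assoc_right, (rule hom_intros)+)+ (rule refl)
  also have "\<dots> = cmp (cmp ?ev (tensm ?a (idm B))) (tensm (mu ?E) (idm B))"
    unfolding tau_mu[symmetric] app_exp_alg[OF b]
    by (subst cmp_assoc_right, (rule hom_intros)+)+ (rule refl)
  also have "\<dots> = cmp ?ev (tensm (cmp ?a (mu ?E)) (idm B))"
    by (simp add: app_tensm_cmp[OF exp_alg_Hom[OF b] mu_Hom])
  finally show "cmp ?ev (tensm (cmp ?a (Mm ?a)) (idm B)) = cmp ?ev (tensm (cmp ?a (mu ?E)) (idm B))" .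
qed (rule hom_intros)+

lemma exp_alg_unit:
  assumes b [hom_intros]: "b \<in> Hom (Mo B) B" and unit: "cmp b (eta B) = idm B"
  shows "cmp (exp_alg B b) (eta (exp B B)) = idm (exp B B)"
proof (rule exp_ext)
  let ?E = "exp B B" and ?ev = "app B B" and ?a = "exp_alg B b"
  have "cmp ?ev (tensm (cmp ?a (eta ?E)) (idm B))
      = cmp (cmp b (cmp (Mm ?ev) (tau ?E B))) (tensm (eta ?E) (idm B))"
    by (simp add: app_tensm_cmp[OF exp_alg_Hom[OF b] eta_Hom] app_exp_alg[OF b])
  also have "\<dots> = cmp b (cmp (Mm ?ev) (eta (tens ?E B)))"
    unfolding tau_eta[symmetric] by (subst cmp_assoc_right, (rule hom_intros)+)+ (rule refl)
  also have "\<dots> = cmp (cmp b (eta B)) ?ev"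
    unfolding eta_nat[OF app_Hom, symmetric] by (subst cmp_assoc_right, (rule hom_intros)+)+ (rule refl)
  also have "\<dots> = cmp ?ev (tensm (idm ?E) (idm B))"
    by (simp add: unit app_tensm_idm idm_left[OF app_Hom])
  finally show "cmp ?ev (tensm (cmp ?a (eta ?E)) (idm B)) = cmp ?ev (tensm (idm ?E) (idm B))" .
qed (rule hom_intros)+

lemma exp_alg_int_comp:
  assumes b [hom_intros]: "b \<in> Hom (Mo B) B"
  shows "cmp (int_comp B) (tensm (exp_alg B b) (idm (exp B B)))
    = cmp (exp_alg B b) (cmp (Mm (int_comp B)) (tau (exp B B) (exp B B)))"
proof (rule exp_ext)
  let ?E = "exp B B" and ?ev = "app B B" and ?a = "exp_alg B b" and ?c = "int_comp B"
  let ?t = "cmp (tau (tens ?E ?E) B) (tensm (tau ?E ?E) (idm B))"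
  let ?k = "cmp ?ev (cmp (tensm (idm ?E) ?ev) (asc ?E ?E B))"
  have "cmp ?ev (tensm (cmp ?c (tensm ?a (idm ?E))) (idm B))
      = cmp (cmp (cmp ?ev (tensm ?a (idm B))) (tensm (Mm (idm ?E)) ?ev)) (asc (Mo ?E) ?E B)"
    unfolding app_int_comp_tensm[OF exp_alg_Hom[OF b] idm_Hom] app_tensm_idm Mm_idm
      tensm_snd_then_fst[OF exp_alg_Hom[OF b] app_Hom]
    by (subst cmp_assoc_right, (rule hom_intros)+)+ (rule refl)
  also have "\<dots> = cmp b (cmp (Mm (cmp ?ev (tensm (idm ?E) ?ev))) (cmp (Mm (asc ?E ?E B)) ?t))"
    unfolding app_exp_alg_tensm_Mm[OF b idm_Hom app_Hom] tau_assoc[symmetric]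
    by (subst cmp_assoc_right, (rule hom_intros)+)+ (rule refl)
  also have "\<dots> = cmp b (cmp (Mm ?k) ?t)"
    unfolding Mm_cmp[OF tensm_Hom[OF idm_Hom app_Hom] app_Hom]
      Mm_cmp[OF cmp_Hom[OF asc_Hom tensm_Hom[OF idm_Hom app_Hom]] app_Hom]
      Mm_cmp[OF asc_Hom tensm_Hom[OF idm_Hom app_Hom]]
    by (subst cmp_assoc_right, (rule hom_intros)+)+ (rule refl)
  finally have lhs: "cmp ?ev (tensm (cmp ?c (tensm ?a (idm ?E))) (idm B)) = cmp b (cmp (Mm ?k) ?t)" .
  have "cmp ?ev (tensm (cmp ?a (cmp (Mm ?c) (tau ?E ?E))) (idm B))
      = cmp (cmp (cmp ?ev (tensm ?a (idm B))) (tensm (Mm ?c) (idm B))) (tensm (tau ?E ?E) (idm B))"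
    unfolding app_tensm_cmp[OF exp_alg_Hom[OF b] cmp_Hom[OF tau_Hom Mm_Hom[OF int_comp_Hom]]]
      tensm_cmp_idm[OF tau_Hom Mm_Hom[OF int_comp_Hom]]
    by (subst cmp_assoc_right, (rule hom_intros)+)+ (rule refl)
  also have "\<dots> = cmp b (cmp (Mm ?k) ?t)"
    unfolding app_exp_alg_tensm_Mm[OF b int_comp_Hom idm_Hom] app_int_comp
    by (subst cmp_assoc_right, (rule hom_intros)+)+ (rule refl)
  finally show "cmp ?ev (tensm (cmp ?c (tensm ?a (idm ?E))) (idm B))
      = cmp ?ev (tensm (cmp ?a (cmp (Mm ?c) (tau ?E ?E))) (idm B))"
    using lhs by simp
qed (rule hom_intros)+

lemma em_monoid_exp:
  assumes "b \<in> Hom (Mo B) B" "cmp b (Mm b) = cmp b (mu B)" "cmp b (eta B) = idm B"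
  shows "em_monoid Hom cmp idm tens tensm I asc lu ru Mo Mm eta mu tau
    (exp B B) (exp_alg B b) (int_comp B) (int_ident B)"
  unfolding em_monoid_def
  using exp_alg_Hom exp_alg_mult exp_alg_unit exp_alg_int_comp
    int_comp_Hom int_ident_Hom int_comp_assoc int_comp_left_unit int_comp_right_unit assms
  by blast

end

theorem theorem15:
  fixes Hom :: "'o \<Rightarrow> 'o \<Rightarrow> 'm set"
    and cmp :: "'m \<Rightarrow> 'm \<Rightarrow> 'm"
    and idm :: "'o \<Rightarrow> 'm"
    and tens :: "'o \<Rightarrow> 'o \<Rightarrow> 'o"
    and tensm :: "'m \<Rightarrow> 'm \<Rightarrow> 'm"
    and I :: 'o
    and asc :: "'o \<Rightarrow> 'o \<Rightarrow> 'o \<Rightarrow> 'm"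
    and lu :: "'o \<Rightarrow> 'm"
    and ru :: "'o \<Rightarrow> 'm"
    and exp :: "'o \<Rightarrow> 'o \<Rightarrow> 'o"
    and app :: "'o \<Rightarrow> 'o \<Rightarrow> 'm"
    and Mo :: "'o \<Rightarrow> 'o"
    and Mm :: "'m \<Rightarrow> 'm"
    and eta :: "'o \<Rightarrow> 'm"
    and mu :: "'o \<Rightarrow> 'm"
    and tau :: "'o \<Rightarrow> 'o \<Rightarrow> 'm"
    and A :: 'o
  assumes "strong_monad_closed Hom cmp idm tens tensm I asc lu ru exp app Mo Mm eta mu tau"
  shows "let E = exp (Mo A) (Mo A);
             p = cmp (mu A) (cmp (Mm (app (Mo A) (Mo A))) (tau E (Mo A)));
             k = cmp (app (Mo A) (Mo A)) (cmp (tensm (idm E) (app (Mo A) (Mo A))) (asc E E (Mo A)));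
             comp = Lam Hom cmp idm tensm exp app (tens E E) (Mo A) (Mo A) k;
             ident = Lam Hom cmp idm tensm exp app I (Mo A) (Mo A) (lu (Mo A))
         in em_monoid Hom cmp idm tens tensm I asc lu ru Mo Mm eta mu tau
              E (Lam Hom cmp idm tensm exp app (Mo E) (Mo A) (Mo A) p) comp ident"
proof -
  interpret strong_monad_closed Hom cmp idm tens tensm I asc lu ru exp app Mo Mm eta mu tau
    by (fact assms)
  have "em_monoid Hom cmp idm tens tensm I asc lu ru Mo Mm eta mu tau
      (exp (Mo A) (Mo A)) (exp_alg (Mo A) (mu A)) (int_comp (Mo A)) (int_ident (Mo A))"
    using mu_Hom mu_assoc mu_eta_left by (rule em_monoid_exp)
  then show ?thesis
    unfolding Let_def exp_alg_def int_comp_def int_ident_def .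
qed

end
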